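(* Let $p\ge1$, $\phi_1,\dots,\phi_p:\mathbb Z\to\mathbb C$, $v:\mathbb Z\to\mathbb C$ and integers $t>s$. Then $$\sum_{j=1}^{t-s}H(t,s+j)\,v_{s+j}=\det M,$$ where $M$ is the $(t-s)\times(t-s)$ matrix obtained from $\Phi_{t,s}$ by replacing its first column with $(v_{s+1},v_{s+2},\dots,v_t)^{T}$.
   Context: $\Gamma_t$ is the $p\times p$ companion matrix with first row $(\phi_1(t),\dots,\phi_p(t))$, entries $(i,i-1)$ equal to $1$ for $2\le i\le p$, other entries $0$. For $t>u$ the Green's function $H(t,u)$ is the $(1,1)$ entry of $\Gamma_t\Gamma_{t-1}\cdots\Gamma_{u+1}$, and $H(u,u)=1$. Convention: $\phi_l=0$ for $l>p$. For $t>s$, $\Phi_{t,s}$ is the $(t-s)\times(t-s)$ matrix with $(i,j)$ entry $-1$ if $j=i+1$, $\phi_{i-j+1}(s+i)$ if $1\le j\le i$, $0$ if $j>i+1$. *)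

theory Defs
  imports Complex_Main "Jordan_Normal_Form.Determinant"
begin

definition phic :: "nat \<Rightarrow> (nat \<Rightarrow> int \<Rightarrow> complex) \<Rightarrow> nat \<Rightarrow> int \<Rightarrow> complex" where
  "phic p phi l t = (if 1 \<le> l \<and> l \<le> p then phi l t else 0)"

definition Gamma :: "nat \<Rightarrow> (nat \<Rightarrow> int \<Rightarrow> complex) \<Rightarrow> int \<Rightarrow> complex mat" where
  "Gamma p phi t = mat p p (\<lambda>(i,j). if i = 0 then phic p phi (j+1) t
                                     else if i = j + 1 then 1 else 0)"

fun gprod :: "nat \<Rightarrow> (nat \<Rightarrow> int \<Rightarrow> complex) \<Rightarrow> int \<Rightarrow> nat \<Rightarrow> complex mat" where
  "gprod p phi t 0 = 1\<^sub>m p"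
| "gprod p phi t (Suc n) = Gamma p phi t * gprod p phi (t - 1) n"

text \<open>Green's function: H(u,u) = 1, and for t > u the (1,1) entry of Gamma_t ... Gamma_(u+1).
  (Values for t < u are not used.)\<close>
definition green :: "nat \<Rightarrow> (nat \<Rightarrow> int \<Rightarrow> complex) \<Rightarrow> int \<Rightarrow> int \<Rightarrow> complex" where
  "green p phi t u = (if t = u then 1
                      else if t > u then gprod p phi t (nat (t - u)) $$ (0,0) else 0)"

text \<open>Phi_{t,s} (0-indexed; paper entry (i+1,j+1)): -1 if j = i+1,
  phi_{i-j+1}(s+i+1) if j \<le> i, 0 otherwise.\<close>
definition PhiM :: "nat \<Rightarrow> (nat \<Rightarrow> int \<Rightarrow> complex) \<Rightarrow> int \<Rightarrow> int \<Rightarrow> complex mat" where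
  "PhiM p phi t s = mat (nat (t - s)) (nat (t - s))
     (\<lambda>(i,j). if j = i + 1 then -1
              else if j \<le> i then phic p phi (i - j + 1) (s + int i + 1) else 0)"

definition MM :: "nat \<Rightarrow> (nat \<Rightarrow> int \<Rightarrow> complex) \<Rightarrow> (int \<Rightarrow> complex) \<Rightarrow> int \<Rightarrow> int \<Rightarrow> complex mat" where
  "MM p phi v t s = mat (nat (t - s)) (nat (t - s))
     (\<lambda>(i,j). if j = 0 then v (s + int i + 1) else PhiM p phi t s $$ (i,j))"

end

theory Submission
  imports Defs
begin

text \<open>Expanding det M along its first row, whose only nonzero entries are v(s+1) and -1,
  gives det M = v(s+1) det Phi(t,s+1) + det M', where M' is the matrix of the same shape
  for (t,s+1). Applying the theorem itself to Phi(t,s+1), whose first column is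
  (phi_1(s+2), phi_2(s+3), ...), identifies det Phi(t,s+1) with
  the sum of H(t,s+1+j) phi_j(s+1+j), which is H(t,s+1) by the last-step recurrence of
  the Green's function, read off the first row of the companion product. So the claim
  follows by strong induction on t - s.\<close>

lemma Gamma_carrier [simp]: "Gamma p phi t \<in> carrier_mat p p"
  unfolding Gamma_def by simp

lemma gprod_carrier [simp]: "gprod p phi t m \<in> carrier_mat p p"
  by (induction m arbitrary: t) (simp_all add: mult_carrier_mat[OF Gamma_carrier])

lemma gprod_dim [simp]: "dim_row (gprod p phi t m) = p" "dim_col (gprod p phi t m) = p"
  using carrier_matD[OF gprod_carrier[of p phi t m]] by auto

lemma gprod_Suc_right: "gprod p phi t (Suc m) = gprod p phi t m * Gamma p phi (t - int m)"
proof (induction m arbitrary: t)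
  case 0
  show ?case
    using right_mult_one_mat[of "Gamma p phi t" p p] left_mult_one_mat[of "Gamma p phi t" p p]
    by simp
next
  case (Suc m)
  have "gprod p phi t (Suc (Suc m)) = Gamma p phi t * (gprod p phi (t - 1) m * Gamma p phi (t - 1 - int m))"
    using Suc.IH[of "t - 1"] by simp
  also have "\<dots> = gprod p phi t (Suc m) * Gamma p phi (t - 1 - int m)"
    by (simp add: assoc_mult_mat[symmetric, of _ p p _ p _ p])
  finally show ?case
    by (simp add: algebra_simps)
qed

lemma phic_eq_0_if_gt: "p < l \<Longrightarrow> phic p phi l x = 0"
  unfolding phic_def by simp

text \<open>Right multiplication by a companion matrix maps a first row (r_0,...,r_{p-1}) to
  (r_0 phi_1 + r_1, ..., r_0 phi_{p-1} + r_{p-1}, r_0 phi_p); unrolling this m times gives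
  each first-row entry of the product in terms of (0,0) entries of shorter products. The
  final term is the contribution of the identity matrix.\<close>

lemma gprod_first_row:
  assumes "k < p"
  shows "gprod p phi t m $$ (0,k) =
    (\<Sum>j<m. gprod p phi t (m - Suc j) $$ (0,0) * phic p phi (k + Suc j) (t - int m + int (Suc j)))
    + (if k + m = 0 then 1 else 0)"
  using assms
proof (induction m arbitrary: k)
  case 0
  then show ?case by simp
next
  case (Suc m)
  let ?A = "gprod p phi t m"
  let ?a = "phic p phi (k + 1) (t - int m)"
  have "gprod p phi t (Suc m) $$ (0,k) = (\<Sum>i<p. ?A $$ (0,i) * Gamma p phi (t - int m) $$ (i,k))"
    using Suc.prems unfolding gprod_Suc_right
    by (simp add: scalar_prod_def row_def col_def lessThan_atLeast0 Gamma_def)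
  also have "\<dots> = (\<Sum>i<p. if i = 0 then ?A $$ (0,i) * ?a else 0)
                 + (\<Sum>i<p. if i = k + 1 then ?A $$ (0,i) else 0)"
    unfolding sum.distrib[symmetric] using Suc.prems
    by (intro sum.cong) (auto simp: Gamma_def)
  also have "\<dots> = ?A $$ (0,0) * ?a + (if k + 1 < p then ?A $$ (0,k+1) else 0)"
    using Suc.prems by (simp add: sum.delta')
  also have "(if k + 1 < p then ?A $$ (0,k+1) else 0) =
     (\<Sum>j<m. gprod p phi t (m - Suc j) $$ (0,0) * phic p phi (k + 1 + Suc j) (t - int m + int (Suc j)))"
    using Suc.IH[of "k + 1"] by (simp add: phic_eq_0_if_gt)
  finally show ?case
    unfolding sum.lessThan_Suc_shift by (simp add: algebra_simps)
qed

lemma green_eq_gprod: "1 \<le> p \<Longrightarrow> green p phi t (t - int i) = gprod p phi t i $$ (0,0)"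
proof (cases i)
  case (Suc k)
  have "nat (t - (t - int i)) = i" by simp
  then show ?thesis
    unfolding green_def using Suc by (simp del: gprod.simps)
qed (simp add: green_def)

lemma green_recurrence:
  assumes "1 \<le> p" "1 \<le> m"
  shows "green p phi t (t - int m) =
    (\<Sum>j<m. green p phi t (t - int m + int (Suc j)) * phic p phi (Suc j) (t - int m + int (Suc j)))"
proof -
  have "green p phi t (t - int m + int (Suc j)) = gprod p phi t (m - Suc j) $$ (0,0)"
    if "j < m" for j
  proof -
    have "t - int m + int (Suc j) = t - int (m - Suc j)"
      using that by simp
    then show ?thesis
      using green_eq_gprod[OF assms(1)] by presburger
  qed
  then show ?thesis
    using gprod_first_row[of 0 p phi t m] assms by (simp add: green_eq_gprod)
qed

lemma MM_carrier: "MM p phi v t (t - int n) \<in> carrier_mat n n"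
  unfolding MM_def by simp

lemma MM_index:
  "i < n \<Longrightarrow> j < n \<Longrightarrow> MM p phi v t (t - int n) $$ (i,j) =
    (if j = 0 then v (t - int n + int i + 1) else if j = i + 1 then -1
     else if j \<le> i then phic p phi (i - j + 1) (t - int n + int i + 1) else 0)"
  unfolding MM_def PhiM_def by simp

lemma PhiM_eq_MM: "PhiM p phi t u = MM p phi (\<lambda>x. phic p phi (nat (x - u)) x) t u"
proof -
  have "nat (int i + 1) = Suc i" for i :: nat by simp
  then show ?thesis
    unfolding MM_def PhiM_def by (intro eq_matI) auto
qed

lemma mat_delete_MM_0_0: "mat_delete (MM p phi v t (t - int (Suc m))) 0 0 = PhiM p phi t (t - int m)"
  unfolding mat_delete_def MM_def PhiM_def by (intro eq_matI) (auto simp: algebra_simps)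

lemma mat_delete_MM_0_1:
  "1 \<le> m \<Longrightarrow> mat_delete (MM p phi v t (t - int (Suc m))) 0 1 = MM p phi v t (t - int m)"
  unfolding mat_delete_def MM_def PhiM_def by (intro eq_matI) (auto simp: algebra_simps)

lemma det_MM_1: "det (MM p phi v t (t - 1)) = v t"
proof -
  let ?M = "MM p phi v t (t - int 1)"
  have "mat_delete ?M 0 0 \<in> carrier_mat 0 0"
    using mat_delete_carrier[OF MM_carrier[of p phi v t 1]] by simp
  then have "det ?M = ?M $$ (0,0)"
    using laplace_expansion_row[OF MM_carrier, of 0 1] by (simp add: cofactor_def)
  then show ?thesis
    using MM_index[of 0 1 0 p phi v t] by simp
qed

lemma det_MM_Suc:
  assumes "1 \<le> m"
  shows "det (MM p phi v t (t - int (Suc m))) =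
    v (t - int m) * det (PhiM p phi t (t - int m)) + det (MM p phi v t (t - int m))"
proof -
  let ?M = "MM p phi v t (t - int (Suc m))"
  have first_row: "?M $$ (0,j) = (if j = 0 then v (t - int m) else if j = 1 then -1 else 0)"
    if "j < Suc m" for j
    using MM_index[of 0 "Suc m" j p phi v t] that assms by auto
  have "det ?M = (\<Sum>j<Suc m. ?M $$ (0,j) * cofactor ?M 0 j)"
    using laplace_expansion_row[OF MM_carrier, of 0 "Suc m"] by simp
  also have "\<dots> = (\<Sum>j<Suc m. if j = 0 then v (t - int m) * cofactor ?M 0 0
                     else if j = 1 then - cofactor ?M 0 1 else 0)"
    using first_row by (intro sum.cong) auto
  also have "\<dots> = v (t - int m) * cofactor ?M 0 0 - cofactor ?M 0 1"
    using assms by (simp add: sum.If_cases lessThan_Suc_eq_insert_0 atLeast0LessThan[symmetric])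
  finally show ?thesis
    unfolding cofactor_def mat_delete_MM_0_0 mat_delete_MM_0_1[OF assms] by simp
qed

lemma sum_green_eq_det_MM:
  assumes "1 \<le> p" "1 \<le> n"
  shows "(\<Sum>j<n. green p phi t (t - int n + int (Suc j)) * v (t - int n + int (Suc j)))
     = det (MM p phi v t (t - int n))"
  using assms(2)
proof (induction n arbitrary: v rule: less_induct)
  case (less n)
  then obtain m where n: "n = Suc m" by (cases n) auto
  show ?case
  proof (cases "m = 0")
    case True
    then show ?thesis using n det_MM_1 by (simp add: green_def)
  next
    case False
    then have m: "1 \<le> m" by simp
    let ?u = "t - int m"
    have shift: "nat (?u + int (Suc j) - ?u) = Suc j" for j
      by simp
    have "det (PhiM p phi t ?u) = det (MM p phi (\<lambda>x. phic p phi (nat (x - ?u)) x) t ?u)"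
      by (simp only: PhiM_eq_MM)
    also have "\<dots> = (\<Sum>j<m. green p phi t (?u + int (Suc j))
                         * phic p phi (nat (?u + int (Suc j) - ?u)) (?u + int (Suc j)))"
      using less.IH[of m "\<lambda>x. phic p phi (nat (x - ?u)) x", OF _ m] n by simp
    also have "\<dots> = (\<Sum>j<m. green p phi t (?u + int (Suc j)) * phic p phi (Suc j) (?u + int (Suc j)))"
      by (simp only: shift)
    also have "\<dots> = green p phi t ?u"
      using green_recurrence[OF assms(1) m] by simp
    finally have "det (PhiM p phi t ?u) = green p phi t ?u" .
    moreover have "det (MM p phi v t ?u)
        = (\<Sum>j<m. green p phi t (?u + int (Suc j)) * v (?u + int (Suc j)))"
      using less.IH[of m v] n m by simp
    ultimately show ?thesis
      unfolding n det_MM_Suc[OF m] sum.lessThan_Suc_shift by (simp add: algebra_simps)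
  qed
qed

theorem proposition5:
  fixes p :: nat and phi :: "nat \<Rightarrow> int \<Rightarrow> complex" and v :: "int \<Rightarrow> complex"
    and t s :: int
  assumes "p \<ge> 1" and "t > s"
  shows "(\<Sum>j = 1..nat (t - s). green p phi t (s + int j) * v (s + int j)) = det (MM p phi v t s)"
proof -
  define n where "n = nat (t - s)"
  have s: "s = t - int n" and n: "1 \<le> n"
    using assms(2) unfolding n_def by auto
  have "(\<Sum>j = 1..n. green p phi t (s + int j) * v (s + int j))
      = (\<Sum>j<n. green p phi t (s + int (Suc j)) * v (s + int (Suc j)))"
    by (simp add: sum.atLeast1_atMost_eq)
  also have "\<dots> = det (MM p phi v t s)"
    using sum_green_eq_det_MM[OF assms(1) n, of phi t v] unfolding s[symmetric] .
  finally show ?thesis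
    unfolding n_def .
qed

end
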